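(* A nonzero finitely generated $\mathbb{Z}$-module is not isomorphic to the inverse limit of any inverse system, indexed by a countable upward directed poset, of injective $\mathbb{Z}$-modules and surjective homomorphisms.
   Context: For $\mathbb{Z}$-modules, injective is equivalent to divisible. *)

theory Defs
  imports "HOL-Algebra.Algebra" "HOL-Library.Countable_Set"
begin

text \<open>Z-modules are rendered as commutative groups (HOL-Algebra).  An injective
  Z-module is rendered as a divisible abelian group (injective = divisible for Z-modules).\<close>

definition divisible_group :: "('a, 'm) monoid_scheme \<Rightarrow> bool" where
  "divisible_group E \<longleftrightarrow> comm_group E \<and>
     (\<forall>x\<in>carrier E. \<forall>n::nat. n > 0 \<longrightarrow> (\<exists>y\<in>carrier E. y [^]\<^bsub>E\<^esub> n = x))"

definition finitely_generated_group :: "('a, 'm) monoid_scheme \<Rightarrow> bool" where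
  "finitely_generated_group G \<longleftrightarrow>
     (\<exists>S. finite S \<and> S \<subseteq> carrier G \<and> generate G S = carrier G)"

definition inverse_system ::
  "'i set \<Rightarrow> ('i \<Rightarrow> 'i \<Rightarrow> bool) \<Rightarrow> ('i \<Rightarrow> 'a monoid) \<Rightarrow> ('i \<Rightarrow> 'i \<Rightarrow> 'a \<Rightarrow> 'a) \<Rightarrow> bool" where
  "inverse_system I R A f \<longleftrightarrow>
     (\<forall>i\<in>I. comm_group (A i)) \<and>
     (\<forall>i\<in>I. \<forall>j\<in>I. R i j \<longrightarrow> f i j \<in> hom (A j) (A i)) \<and>
     (\<forall>i\<in>I. \<forall>x\<in>carrier (A i). f i i x = x) \<and>
     (\<forall>i\<in>I. \<forall>j\<in>I. \<forall>k\<in>I. R i j \<longrightarrow> R j k \<longrightarrow>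
        (\<forall>x\<in>carrier (A k). f i j (f j k x) = f i k x))"

definition countable_directed_poset :: "'i set \<Rightarrow> ('i \<Rightarrow> 'i \<Rightarrow> bool) \<Rightarrow> bool" where
  "countable_directed_poset I R \<longleftrightarrow>
     countable I \<and>
     (\<forall>i\<in>I. R i i) \<and>
     (\<forall>i\<in>I. \<forall>j\<in>I. R i j \<longrightarrow> R j i \<longrightarrow> i = j) \<and>
     (\<forall>i\<in>I. \<forall>j\<in>I. \<forall>k\<in>I. R i j \<longrightarrow> R j k \<longrightarrow> R i k) \<and>
     (\<forall>i\<in>I. \<forall>j\<in>I. \<exists>k\<in>I. R i k \<and> R j k)"

definition inverse_limit ::
  "'i set \<Rightarrow> ('i \<Rightarrow> 'i \<Rightarrow> bool) \<Rightarrow> ('i \<Rightarrow> 'a monoid) \<Rightarrow> ('i \<Rightarrow> 'i \<Rightarrow> 'a \<Rightarrow> 'a) \<Rightarrow> ('i \<Rightarrow> 'a) monoid" where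
  "inverse_limit I R A f =
     \<lparr> partial_object.carrier = {x. (\<forall>i\<in>I. x i \<in> carrier (A i)) \<and> (\<forall>i. i \<notin> I \<longrightarrow> x i = undefined) \<and>
                     (\<forall>i\<in>I. \<forall>j\<in>I. R i j \<longrightarrow> f i j (x j) = x i)},
       monoid.mult = (\<lambda>x y. \<lambda>i. if i \<in> I then x i \<otimes>\<^bsub>A i\<^esub> y i else undefined),
       monoid.one = (\<lambda>i. if i \<in> I then \<one>\<^bsub>A i\<^esub> else undefined) \<rparr>"

end

theory Submission
  imports Defs
begin

text \<open>A finitely generated divisible abelian group is trivial. By induction on the number of
  generators: if every element of \<open>\<langle>S\<rangle>\<close> is an \<open>n\<close>-th power modulo a subgroup \<open>N\<close> for all
  \<open>n > 0\<close>, then \<open>\<langle>S\<rangle>\<^sup>d \<subseteq> N\<close> for some \<open>d > 0\<close> (apply the induction hypothesis modulo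
  \<open>N\<langle>g\<rangle>\<close>; writing \<open>g\<close> as a \<open>2d\<close>-th power modulo \<open>N\<close> then puts an odd power of \<open>g\<close> into \<open>N\<close>).
  For \<open>N = 1\<close> and \<open>\<langle>S\<rangle> = G\<close> this gives \<open>G = G\<^sup>d = 1\<close>.
  Over a countable directed index set, surjective transition maps make every projection of
  the inverse limit surjective: lift an element along a cofinal chain. So if \<open>M\<close> were
  isomorphic to the limit, each \<open>A\<^sub>i\<close> would be a quotient of \<open>M\<close>, hence finitely generated
  and divisible, hence trivial; then so would be the limit, and \<open>M\<close>.\<close>

definition divisible_modulo :: "('a, 'm) monoid_scheme \<Rightarrow> 'a set \<Rightarrow> 'a set \<Rightarrow> bool" where
  "divisible_modulo G H N \<longleftrightarrow>
     (\<forall>n::nat. n > 0 \<longrightarrow> (\<forall>x\<in>H. \<exists>y\<in>H. \<exists>z\<in>N. x = y [^]\<^bsub>G\<^esub> n \<otimes>\<^bsub>G\<^esub> z))"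

lemma (in group) mem_set_mult_generate_singleton:
  assumes "g \<in> carrier G"
  shows "x \<in> K <#> generate G {g} \<longleftrightarrow> (\<exists>k\<in>K. \<exists>a::int. x = k \<otimes> g [^] a)"
  using generate_pow[OF assms] unfolding set_mult_def by auto

lemma (in comm_group) generate_insert:
  assumes "S \<subseteq> carrier G" "g \<in> carrier G"
  shows "generate G (insert g S) = generate G S <#> generate G {g}"
proof
  have "g \<in> generate G S <#> generate G {g}"
    unfolding mem_set_mult_generate_singleton[OF assms(2)] using assms(2)
    by (intro bexI[of _ \<one>] exI[of _ 1] generate.one) simp
  moreover have "s \<in> generate G S <#> generate G {g}" if "s \<in> S" for s
    unfolding mem_set_mult_generate_singleton[OF assms(2)] using that assms
    by (intro bexI[of _ s] exI[of _ 0] generate.incl) auto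
  ultimately have "insert g S \<subseteq> generate G S <#> generate G {g}" by blast
  then show "generate G (insert g S) \<subseteq> generate G S <#> generate G {g}"
    using assms by (intro generate_subgroup_incl mult_subgroups generate_is_subgroup) auto
next
  have sub: "subgroup (generate G (insert g S)) G"
    using assms by (intro generate_is_subgroup) auto
  have "generate G S \<subseteq> generate G (insert g S)" "generate G {g} \<subseteq> generate G (insert g S)"
    using mono_generate[of S "insert g S"] mono_generate[of "{g}" "insert g S"] by auto
  then show "generate G S <#> generate G {g} \<subseteq> generate G (insert g S)"
    unfolding set_mult_def using subgroup.m_closed[OF sub] by blast
qed

lemma (in group) int_pow_in_subgroup_abs:
  assumes "subgroup N G" "g \<in> carrier G" "g [^] (m::int) \<in> N"
  shows "g [^] nat \<bar>m\<bar> \<in> N"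
proof (cases "m \<ge> 0")
  case True
  then show ?thesis using assms(3) by (simp flip: int_pow_int)
next
  case False
  then have "g [^] nat \<bar>m\<bar> = inv (g [^] m)"
    using assms(2) by (simp add: int_pow_neg flip: int_pow_int)
  then show ?thesis using assms(3) subgroup.m_inv_closed[OF assms(1)] by simp
qed

lemma (in comm_group) divisible_modulo_generate_insert:
  assumes "S \<subseteq> carrier G" "g \<in> carrier G" "subgroup N G"
    and "divisible_modulo G (generate G (insert g S)) N"
  shows "divisible_modulo G (generate G S) (N <#> generate G {g})"
  unfolding divisible_modulo_def
proof (intro allI impI ballI)
  fix n :: nat and x assume n: "n > 0" and x: "x \<in> generate G S"
  have "x \<in> generate G (insert g S)" using x mono_generate[of S "insert g S"] by blast
  then obtain y z where y: "y \<in> generate G (insert g S)" and z: "z \<in> N" and x_eq: "x = y [^] n \<otimes> z"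
    using assms(4) n unfolding divisible_modulo_def by blast
  obtain y0 a where y0: "y0 \<in> generate G S" and y_eq: "y = y0 \<otimes> g [^] (a::int)"
    using y unfolding generate_insert[OF assms(1,2)] mem_set_mult_generate_singleton[OF assms(2)] by blast
  have carr: "y0 \<in> carrier G" "z \<in> carrier G"
    using y0 z generate_incl[OF assms(1)] subgroup.subset[OF assms(3)] by auto
  have "x = y0 [^] n \<otimes> (z \<otimes> g [^] (a * int n))"
    using x_eq y_eq carr assms(2) by (simp add: int_pow_distrib int_pow_pow m_ac flip: int_pow_int)
  moreover have "z \<otimes> g [^] (a * int n) \<in> N <#> generate G {g}"
    using z mem_set_mult_generate_singleton[OF assms(2)] by blast
  ultimately show "\<exists>y\<in>generate G S. \<exists>z\<in>N <#> generate G {g}. x = y [^] n \<otimes> z"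
    using y0 by blast
qed

lemma (in comm_group) divisible_modulo_generator_odd_power:
  assumes "S \<subseteq> carrier G" "g \<in> carrier G" "subgroup N G"
    and "divisible_modulo G (generate G (insert g S)) N"
    and "(d::nat) > 0" "\<forall>x\<in>generate G S. x [^] d \<in> N <#> generate G {g}"
  shows "\<exists>t::int. odd t \<and> g [^] t \<in> N"
proof -
  have "g \<in> generate G (insert g S)" "2 * d > 0"
    using assms(5) by (auto intro: generate.incl)
  then obtain y z where y: "y \<in> generate G (insert g S)" and z: "z \<in> N"
    and g_eq: "g = y [^] (2 * d) \<otimes> z"
    using assms(4) unfolding divisible_modulo_def by blast
  obtain y0 a where y0: "y0 \<in> generate G S" and y_eq: "y = y0 \<otimes> g [^] (a::int)"
    using y unfolding generate_insert[OF assms(1,2)] mem_set_mult_generate_singleton[OF assms(2)] by blast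
  obtain z1 b where z1: "z1 \<in> N" and y0_pow: "y0 [^] d = z1 \<otimes> g [^] (b::int)"
    using assms(6) y0 mem_set_mult_generate_singleton[OF assms(2)] by blast
  have carr: "y0 \<in> carrier G" "z \<in> carrier G" "z1 \<in> carrier G"
    using y0 z z1 generate_incl[OF assms(1)] subgroup.subset[OF assms(3)] by auto
  have "y [^] (2 * d) = (y0 [^] d) [^] (2::nat) \<otimes> g [^] (2 * a * int d)"
    using y_eq carr assms(2)
    by (simp add: int_pow_distrib int_pow_pow nat_pow_pow mult_ac flip: int_pow_int)
  also have "\<dots> = z1 [^] (2::nat) \<otimes> g [^] (2 * (b + a * int d))"
    unfolding y0_pow using carr assms(2)
    by (simp add: int_pow_distrib int_pow_pow int_pow_mult m_ac algebra_simps flip: int_pow_int)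
  finally have y_pow: "y [^] (2 * d) = z1 [^] (2::nat) \<otimes> g [^] (2 * (b + a * int d))" .
  note g_eq
  also have "y [^] (2 * d) \<otimes> z = (z1 [^] (2::nat) \<otimes> z) \<otimes> g [^] (2 * (b + a * int d))"
    unfolding y_pow using carr assms(2) by (simp add: m_ac)
  finally have "z1 [^] (2::nat) \<otimes> z = g \<otimes> inv (g [^] (2 * (b + a * int d)))"
    using carr assms(2) by (simp add: inv_solve_right)
  also have "\<dots> = g [^] (1 - 2 * (b + a * int d))"
    using assms(2) by (simp add: int_pow_diff)
  finally have "g [^] (1 - 2 * (b + a * int d)) = z1 [^] (2::nat) \<otimes> z" ..
  also have "\<dots> \<in> N"
    using z z1 assms(3) by (metis subgroup.m_closed subgroup_int_pow_closed int_pow_int)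
  finally show ?thesis by (intro exI[of _ "1 - 2 * (b + a * int d)"]) simp
qed

lemma (in comm_group) generate_insert_exponent:
  assumes "S \<subseteq> carrier G" "g \<in> carrier G" "subgroup N G"
    and "\<forall>x\<in>generate G S. x [^] d \<in> N <#> generate G {g}" "g [^] (e::nat) \<in> N"
  shows "\<forall>x\<in>generate G (insert g S). x [^] (d * e) \<in> N"
proof
  fix x assume "x \<in> generate G (insert g S)"
  then obtain k c where k: "k \<in> generate G S" and x_eq: "x = k \<otimes> g [^] (c::int)"
    unfolding generate_insert[OF assms(1,2)] mem_set_mult_generate_singleton[OF assms(2)] by blast
  obtain z b where z: "z \<in> N" and k_pow: "k [^] d = z \<otimes> g [^] (b::int)"
    using assms(4) k mem_set_mult_generate_singleton[OF assms(2)] by blast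
  have carr: "k \<in> carrier G" "z \<in> carrier G"
    using k z generate_incl[OF assms(1)] subgroup.subset[OF assms(3)] by auto
  have "x [^] (d * e) = (k [^] d) [^] e \<otimes> g [^] (c * int d * int e)"
    using x_eq carr assms(2) by (simp add: int_pow_distrib int_pow_pow nat_pow_pow mult_ac flip: int_pow_int)
  also have "\<dots> = z [^] e \<otimes> ((g [^] e) [^] b \<otimes> (g [^] e) [^] (c * int d))"
    unfolding k_pow using carr assms(2)
    by (simp add: int_pow_distrib int_pow_pow m_ac mult.commute mult.left_commute flip: int_pow_int)
  finally show "x [^] (d * e) \<in> N"
    using z assms(3,5) by (metis subgroup.m_closed subgroup_int_pow_closed int_pow_int)
qed

lemma (in comm_group) finite_generate_divisible_modulo_exponent:
  assumes "finite S"
  shows "S \<subseteq> carrier G \<Longrightarrow> subgroup N G \<Longrightarrow> divisible_modulo G (generate G S) N \<Longrightarrow>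
    \<exists>d::nat. d > 0 \<and> (\<forall>x\<in>generate G S. x [^] d \<in> N)"
  using assms
proof (induction S arbitrary: N rule: finite_induct)
  case empty
  then have "\<forall>x\<in>generate G {}. x [^] (1::nat) \<in> N"
    using generate_empty subgroup.one_closed by auto
  then show ?case by blast
next
  case (insert g S)
  then have carr: "S \<subseteq> carrier G" "g \<in> carrier G" by auto
  have "subgroup (N <#> generate G {g}) G"
    using carr(2) by (intro mult_subgroups[OF insert.prems(2)] generate_is_subgroup) auto
  then obtain d :: nat where d: "d > 0" "\<forall>x\<in>generate G S. x [^] d \<in> N <#> generate G {g}"
    using insert.IH[OF carr(1) _ divisible_modulo_generate_insert[OF carr insert.prems(2,3)]] by blast
  obtain t :: int where t: "odd t" "g [^] t \<in> N"
    using divisible_modulo_generator_odd_power[OF carr insert.prems(2,3) d] by blast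
  have "nat \<bar>t\<bar> > 0"
    using t(1) by (cases "t = 0") auto
  moreover have "\<forall>x\<in>generate G (insert g S). x [^] (d * nat \<bar>t\<bar>) \<in> N"
    using generate_insert_exponent[OF carr insert.prems(2) d(2)]
      int_pow_in_subgroup_abs[OF insert.prems(2) carr(2) t(2)] by blast
  ultimately show ?case
    using d(1) by (intro exI[of _ "d * nat \<bar>t\<bar>"]) simp
qed

lemma divisible_finitely_generated_trivial:
  fixes G (structure)
  assumes "divisible_group G" "finitely_generated_group G"
  shows "carrier G = {\<one>\<^bsub>G\<^esub>}"
proof -
  interpret comm_group G using assms(1) unfolding divisible_group_def by blast
  obtain S where S: "finite S" "S \<subseteq> carrier G" "generate G S = carrier G"
    using assms(2) unfolding finitely_generated_group_def by blast
  have div: "\<forall>x\<in>carrier G. \<forall>n::nat. n > 0 \<longrightarrow> (\<exists>y\<in>carrier G. y [^] n = x)"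
    using assms(1) unfolding divisible_group_def by blast
  have "divisible_modulo G (generate G S) {\<one>}"
    unfolding divisible_modulo_def S(3)
  proof (intro allI impI ballI)
    fix n :: nat and x assume "n > 0" "x \<in> carrier G"
    then obtain y where "y \<in> carrier G" "y [^] n = x" using div by blast
    then show "\<exists>y\<in>carrier G. \<exists>z\<in>{\<one>}. x = y [^] n \<otimes> z" by auto
  qed
  then obtain d :: nat where d: "d > 0" "\<forall>x\<in>carrier G. x [^] d \<in> {\<one>}"
    using finite_generate_divisible_modulo_exponent[OF S(1,2) triv_subgroup] unfolding S(3) by blast
  have "x = \<one>" if x: "x \<in> carrier G" for x
  proof -
    obtain y where y: "y \<in> carrier G" "y [^] d = x"
      using div x d(1) by blast
    then show ?thesis using d(2) by blast
  qed
  then show ?thesis using one_closed by blast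
qed

lemma
  assumes "inverse_system I R A f"
  shows inverse_system_hom: "\<lbrakk>i \<in> I; j \<in> I; R i j\<rbrakk> \<Longrightarrow> f i j \<in> hom (A j) (A i)"
    and inverse_system_id: "\<lbrakk>i \<in> I; x \<in> carrier (A i)\<rbrakk> \<Longrightarrow> f i i x = x"
    and inverse_system_comp: "\<lbrakk>i \<in> I; j \<in> I; k \<in> I; R i j; R j k; x \<in> carrier (A k)\<rbrakk>
      \<Longrightarrow> f i j (f j k x) = f i k x"
  using assms unfolding inverse_system_def by blast+

lemma
  assumes "countable_directed_poset I R"
  shows countable_directed_poset_countable: "countable I"
    and countable_directed_poset_refl: "i \<in> I \<Longrightarrow> R i i"
    and countable_directed_poset_trans: "\<lbrakk>i \<in> I; j \<in> I; k \<in> I; R i j; R j k\<rbrakk> \<Longrightarrow> R i k"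
    and countable_directed_poset_upper_bound: "\<lbrakk>i \<in> I; j \<in> I\<rbrakk> \<Longrightarrow> \<exists>k\<in>I. R i k \<and> R j k"
  using assms unfolding countable_directed_poset_def by meson+

lemma countable_directed_cofinal_chain:
  assumes P: "countable_directed_poset I R" and i: "i \<in> I"
  obtains c :: "nat \<Rightarrow> 'i" where "c 0 = i" "\<And>n. c n \<in> I"
    "\<And>m n. m \<le> n \<Longrightarrow> R (c m) (c n)" "\<And>j. j \<in> I \<Longrightarrow> \<exists>n. R j (c n)"
proof -
  define e where "e = from_nat_into I"
  have e: "e n \<in> I" for n
    unfolding e_def using i by (intro from_nat_into) blast
  \<comment> \<open>Each step also climbs above the next element of the enumeration \<open>e\<close> of \<open>I\<close>.\<close>
  have step: "\<exists>k'. (k' \<in> I \<and> (Suc n = 0 \<longrightarrow> k' = i)) \<and> R k k' \<and> R (e n) k'"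
    if "k \<in> I \<and> (n = 0 \<longrightarrow> k = i)" for n k
    using countable_directed_poset_upper_bound[OF P _ e] that by blast
  obtain c where c: "\<And>n. (c n \<in> I \<and> (n = 0 \<longrightarrow> c n = i)) \<and> R (c n) (c (Suc n)) \<and> R (e n) (c (Suc n))"
    using dependent_nat_choice[of "\<lambda>n k. k \<in> I \<and> (n = 0 \<longrightarrow> k = i)"
        "\<lambda>n k k'. R k k' \<and> R (e n) k'", OF _ step] i by blast
  have c_in: "c n \<in> I" and c_step: "R (c n) (c (Suc n))" and c_cofinal: "R (e n) (c (Suc n))" for n
    using c by blast+
  have mono: "R (c m) (c n)" if "m \<le> n" for m n
    using that
  proof (induction n rule: dec_induct)
    case base
    show ?case using countable_directed_poset_refl[OF P c_in] .
  next
    case (step n)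
    show ?case using countable_directed_poset_trans[OF P c_in c_in c_in step(3) c_step] .
  qed
  have "\<exists>n. R j (c n)" if j: "j \<in> I" for j
  proof -
    obtain n where "e n = j"
      unfolding e_def using from_nat_into_surj[OF countable_directed_poset_countable[OF P] j] ..
    then show ?thesis using c_cofinal by blast
  qed
  moreover have "c 0 = i" using c by blast
  ultimately show thesis using that c_in mono by blast
qed

lemma inverse_system_lift_along_chain:
  fixes c :: "nat \<Rightarrow> 'i"
  assumes S: "inverse_system I R A f"
    and surj: "\<forall>i\<in>I. \<forall>j\<in>I. R i j \<longrightarrow> f i j ` carrier (A j) = carrier (A i)"
    and c: "\<And>n. c n \<in> I" "\<And>m n. m \<le> n \<Longrightarrow> R (c m) (c n)"
    and a: "a \<in> carrier (A (c 0))"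
  obtains s where "s 0 = a" "\<And>n. s n \<in> carrier (A (c n))"
    "\<And>m n. m \<le> n \<Longrightarrow> f (c m) (c n) (s n) = s m"
proof -
  have step: "\<exists>y. (y \<in> carrier (A (c (Suc n))) \<and> (Suc n = 0 \<longrightarrow> y = a)) \<and> f (c n) (c (Suc n)) y = x"
    if "x \<in> carrier (A (c n)) \<and> (n = 0 \<longrightarrow> x = a)" for n :: nat and x
  proof -
    have "x \<in> f (c n) (c (Suc n)) ` carrier (A (c (Suc n)))"
      using surj c(1) c(2)[of n "Suc n"] that by simp
    then show ?thesis by blast
  qed
  obtain s where s: "\<And>n. (s n \<in> carrier (A (c n)) \<and> (n = 0 \<longrightarrow> s n = a))
      \<and> f (c n) (c (Suc n)) (s (Suc n)) = s n"
    using dependent_nat_choice[of "\<lambda>n x. x \<in> carrier (A (c n)) \<and> (n = 0 \<longrightarrow> x = a)"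
        "\<lambda>n x y. f (c n) (c (Suc n)) y = x", OF _ step] a by blast
  have "f (c m) (c n) (s n) = s m" if "m \<le> n" for m n
    using that
  proof (induction n rule: dec_induct)
    case base
    then show ?case using inverse_system_id[OF S c(1)] s by blast
  next
    case (step n)
    have "s (Suc n) \<in> carrier (A (c (Suc n)))" using s by blast
    then have "f (c m) (c (Suc n)) (s (Suc n)) = f (c m) (c n) (f (c n) (c (Suc n)) (s (Suc n)))"
      using inverse_system_comp[OF S c(1) c(1) c(1) c(2)[OF step(1)] c(2)[of n "Suc n"]] by simp
    also have "\<dots> = s m" using s step(3) by simp
    finally show ?case .
  qed
  then show thesis using that s by blast
qed

lemma inverse_limit_of_cofinal_thread:
  fixes c :: "nat \<Rightarrow> 'i"
  assumes P: "countable_directed_poset I R" and S: "inverse_system I R A f"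
    and c: "\<And>n. c n \<in> I" "\<And>m n. m \<le> n \<Longrightarrow> R (c m) (c n)" "\<And>j. j \<in> I \<Longrightarrow> \<exists>n. R j (c n)"
    and s: "\<And>n. s n \<in> carrier (A (c n))" "\<And>m n. m \<le> n \<Longrightarrow> f (c m) (c n) (s n) = s m"
  obtains x where "x \<in> carrier (inverse_limit I R A f)" "\<And>n. x (c n) = s n"
proof -
  define N where "N j = (LEAST n. R j (c n))" for j
  define x where "x j = (if j \<in> I then f j (c (N j)) (s (N j)) else undefined)" for j
  have x_eq: "x j = f j (c n) (s n)" if j: "j \<in> I" "R j (c n)" for j n
  proof -
    have "N j \<le> n"
      unfolding N_def using j(2) by (rule Least_le)
    moreover have "R j (c (N j))"
      unfolding N_def using j(2) by (rule LeastI)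
    ultimately have "f j (c n) (s n) = f j (c (N j)) (f (c (N j)) (c n) (s n))"
      using inverse_system_comp[OF S j(1) c(1) c(1) _ c(2)] s(1) by simp
    then show ?thesis
      unfolding x_def using s(2)[OF \<open>N j \<le> n\<close>] j(1) by simp
  qed
  have "x \<in> carrier (inverse_limit I R A f)"
    unfolding inverse_limit_def
  proof (simp, intro conjI ballI allI impI)
    fix j assume j: "j \<in> I"
    then obtain n where n: "R j (c n)" using c(3) by blast
    show "x j \<in> carrier (A j)"
      unfolding x_eq[OF j n] using inverse_system_hom[OF S j c(1) n] s(1) by (rule hom_in_carrier)
  next
    fix j assume "j \<notin> I"
    then show "x j = undefined" unfolding x_def by simp
  next
    fix j k assume jk: "j \<in> I" "k \<in> I" "R j k"
    then obtain n where n: "R k (c n)" using c(3) by blast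
    then have "R j (c n)" using countable_directed_poset_trans[OF P jk(1,2) c(1) jk(3)] by blast
    then show "f j k (x k) = x j"
      using x_eq[OF jk(2) n] x_eq[OF jk(1)] inverse_system_comp[OF S jk(1,2) c(1) jk(3) n s(1)] by simp
  qed
  moreover have "x (c n) = s n" for n
    using x_eq[OF c(1) c(2)[of n n]] inverse_system_id[OF S c(1) s(1)] by simp
  ultimately show thesis using that by blast
qed

lemma inverse_limit_proj_epi:
  assumes P: "countable_directed_poset I R" and S: "inverse_system I R A f"
    and surj: "\<forall>i\<in>I. \<forall>j\<in>I. R i j \<longrightarrow> f i j ` carrier (A j) = carrier (A i)"
    and i: "i \<in> I"
  shows "(\<lambda>x. x i) \<in> epi (inverse_limit I R A f) (A i)"
proof -
  have hom: "(\<lambda>x. x i) \<in> hom (inverse_limit I R A f) (A i)"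
    using i by (intro homI) (auto simp: inverse_limit_def)
  have "a \<in> (\<lambda>x. x i) ` carrier (inverse_limit I R A f)" if a: "a \<in> carrier (A i)" for a
  proof -
    obtain c :: "nat \<Rightarrow> _" where c: "c 0 = i" "\<And>n. c n \<in> I" "\<And>m n. m \<le> n \<Longrightarrow> R (c m) (c n)"
      "\<And>j. j \<in> I \<Longrightarrow> \<exists>n. R j (c n)"
      using countable_directed_cofinal_chain[OF P i] by blast
    have a0: "a \<in> carrier (A (c 0))" using a c(1) by simp
    obtain s where s: "s 0 = a" "\<And>n. s n \<in> carrier (A (c n))"
      "\<And>m n. m \<le> n \<Longrightarrow> f (c m) (c n) (s n) = s m"
      using inverse_system_lift_along_chain[where c = c, OF S surj c(2,3) a0] by blast
    obtain x where x: "x \<in> carrier (inverse_limit I R A f)" "\<And>n. x (c n) = s n"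
      using inverse_limit_of_cofinal_thread[where c = c and s = s, OF P S c(2,3,4) s(2,3)] by blast
    have "a = x i" using x(2)[of 0] s(1) c(1) by simp
    then show ?thesis using x(1) by (rule image_eqI)
  qed
  then show ?thesis
    unfolding epi_def using hom hom_in_carrier[OF hom] by blast
qed

lemma finitely_generated_group_epi:
  assumes "group G" "group H" "h \<in> epi G H" "finitely_generated_group G"
  shows "finitely_generated_group H"
proof -
  interpret group_hom G H h
    using assms(1-3) unfolding group_hom_def group_hom_axioms_def epi_def by blast
  obtain S where S: "finite S" "S \<subseteq> carrier G" "generate G S = carrier G"
    using assms(4) unfolding finitely_generated_group_def by blast
  have "generate H (h ` S) = carrier H"
    using generate_img[OF S(2)] S(3) assms(3) unfolding epi_def by simp
  moreover have "h ` S \<subseteq> carrier H" using S(2) by auto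
  ultimately show ?thesis
    unfolding finitely_generated_group_def using S(1) by blast
qed

lemma inverse_limit_of_trivial_groups:
  assumes "\<And>i. i \<in> I \<Longrightarrow> carrier (A i) = {\<one>\<^bsub>A i\<^esub>}"
    and "x \<in> carrier (inverse_limit I R A f)" "y \<in> carrier (inverse_limit I R A f)"
  shows "x = y"
proof
  fix i
  show "x i = y i"
    using assms by (cases "i \<in> I") (auto simp: inverse_limit_def)
qed

theorem mainTheorem9:
  fixes M :: "'b monoid"
    and I :: "'i set" and R :: "'i \<Rightarrow> 'i \<Rightarrow> bool"
    and A :: "'i \<Rightarrow> 'a monoid" and f :: "'i \<Rightarrow> 'i \<Rightarrow> 'a \<Rightarrow> 'a"
  assumes "comm_group M"
    and "finitely_generated_group M"
    and "carrier M \<noteq> {\<one>\<^bsub>M\<^esub>}"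
    and "countable_directed_poset I R"
    and "inverse_system I R A f"
    and "\<forall>i\<in>I. divisible_group (A i)"
    and "\<forall>i\<in>I. \<forall>j\<in>I. R i j \<longrightarrow> f i j ` carrier (A j) = carrier (A i)"
  shows "\<not> (M \<cong> inverse_limit I R A f)"
proof
  interpret M: comm_group M by fact
  assume "M \<cong> inverse_limit I R A f"
  then obtain h where h: "h \<in> iso M (inverse_limit I R A f)"
    unfolding is_iso_def by blast
  have hom: "h \<in> hom M (inverse_limit I R A f)" and inj: "inj_on h (carrier M)"
    using h unfolding iso_def bij_betw_def by blast+
  have trivial: "carrier (A i) = {\<one>\<^bsub>A i\<^esub>}" if i: "i \<in> I" for i
  proof -
    have "h \<in> epi M (inverse_limit I R A f)"
      using h by (simp add: iso_iff_mon_epi)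
    then have epi: "(\<lambda>x. x i) \<circ> h \<in> epi M (A i)"
      using inverse_limit_proj_epi[OF assms(4,5,7) i] by (rule epi_compose)
    interpret A: comm_group "A i"
      using assms(5) i unfolding inverse_system_def by blast
    have "finitely_generated_group (A i)"
      by (rule finitely_generated_group_epi[OF M.is_group A.is_group epi assms(2)])
    then show ?thesis
      using divisible_finitely_generated_trivial assms(6) i by blast
  qed
  have "m = \<one>\<^bsub>M\<^esub>" if m: "m \<in> carrier M" for m
  proof (rule inj_onD[OF inj _ m M.one_closed])
    show "h m = h \<one>\<^bsub>M\<^esub>"
      using inverse_limit_of_trivial_groups[OF trivial hom_in_carrier[OF hom m]
          hom_in_carrier[OF hom M.one_closed]] .
  qed
  then show False
    using assms(3) M.one_closed by blast
qed

end
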